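(* Let $\lambda$ be an infinite cardinal and let $(\mathscr T,\bar{\mathbf I})$ be a $\lambda^+$-complete tagged tree. Suppose $\lim(\mathscr T)=\bigcup_{\alpha<\lambda}\mathbb B_\alpha$, where each $\mathbb B_\alpha$ is a Borel subset of $\lim(\mathscr T)$. Then there are $\alpha<\lambda$ and a tree $\mathscr T^\dagger$ with $(\mathscr T,\bar{\mathbf I})\le^*(\mathscr T^\dagger,\bar{\mathbf I})$ and $\lim(\mathscr T^\dagger)\subseteq\mathbb B_\alpha$. In particular, if $\mathbf H$ is a function on $\lim(\mathscr T)$ with $|\mathrm{Rang}(\mathbf H)|\le\lambda$ and every fiber $\mathbf H^{-1}(\{x\})$ Borel, then there is $\mathscr T^\dagger$ with $(\mathscr T,\bar{\mathbf I})\le^*(\mathscr T^\dagger,\bar{\mathbf I})$ such that $\mathbf H$ is constant on $\lim(\mathscr T^\dagger)$.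
   Context: A tree is a nonempty set $\mathscr T$ of finite sequences of ordinals, closed under initial segments, such that every $\eta\in\mathscr T$ has at least one immediate successor in $\mathscr T$; $\mathrm{Succ}_{\mathscr T}(\eta)=\{\eta^\frown\langle\alpha\rangle:\eta^\frown\langle\alpha\rangle\in\mathscr T\}$. $\lim(\mathscr T)$ is the set of $\omega$-sequences of ordinals all of whose finite initial segments lie in $\mathscr T$, with the topology whose basic open sets are $\{\nu\in\lim(\mathscr T):\eta\triangleleft\nu\}$ for $\eta\in\mathscr T$; "Borel" refers to this topology. An ideal on a set $X$ is a family of subsets of $X$ containing all singletons, closed under subsets and finite unions, and not containing $X$; it is $\mu$-complete if closed under unions of fewer than $\mu$ members. A tagged tree is a pair $(\mathscr T,\bar{\mathbf I})$ where $\mathscr T$ is a tree and $\bar{\mathbf I}$ assigns to some (possibly all) $\eta\in\mathscr T$ an ideal $\mathbf I_\eta$ on a set $\mathrm{Dom}(\mathbf I_\eta)\supseteq\mathrm{Succ}_{\mathscr T}(\eta)$. The tagged tree is $\mu$-complete if every defined $\mathbf I_\eta$ ($\eta\in\mathscr T$) is $\mu$-complete. $\eta\in\mathscr T$ is a splitting point of $(\mathscr T,\bar{\mathbf I})$ if $\mathbf I_\eta$ is defined and $\mathrm{Succ}_{\mathscr T}(\eta)\notin\mathbf I_\eta$. For trees $\mathscr T'\subseteq\mathscr T$, $(\mathscr T,\bar{\mathbf I})\le^*(\mathscr T',\bar{\mathbf I})$ means: for every $\eta\in\mathscr T'$ which is a splitting point of $(\mathscr T,\bar{\mathbf I})$ we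 have $\mathrm{Succ}_{\mathscr T'}(\eta)\notin\mathbf I_\eta$ (so the splitting points of $(\mathscr T',\bar{\mathbf I})$ are exactly the splitting points of $(\mathscr T,\bar{\mathbf I})$ lying in $\mathscr T'$). *)

theory Defs
  imports "HOL-Analysis.Sigma_Algebra"
begin

text \<open>Finite sequences are lists; \<omega>-sequences are functions nat => 'a.
  The ordinals are abstracted to an arbitrary type 'a.\<close>

definition is_tree :: "'a list set \<Rightarrow> bool" where
  "is_tree T \<longleftrightarrow> T \<noteq> {} \<and> (\<forall>\<eta>\<in>T. \<forall>n. take n \<eta> \<in> T)
     \<and> (\<forall>\<eta>\<in>T. \<exists>a. \<eta> @ [a] \<in> T)"

definition Succ :: "'a list set \<Rightarrow> 'a list \<Rightarrow> 'a list set" where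
  "Succ T \<eta> = {\<nu>. \<exists>a. \<nu> = \<eta> @ [a] \<and> \<nu> \<in> T}"

definition init_seg :: "'a list \<Rightarrow> (nat \<Rightarrow> 'a) \<Rightarrow> bool" where
  "init_seg \<eta> \<nu> \<longleftrightarrow> map \<nu> [0..<length \<eta>] = \<eta>"

definition lim :: "'a list set \<Rightarrow> (nat \<Rightarrow> 'a) set" where
  "lim T = {\<nu>. \<forall>n. map \<nu> [0..<n] \<in> T}"

definition basic_open :: "'a list set \<Rightarrow> 'a list \<Rightarrow> (nat \<Rightarrow> 'a) set" where
  "basic_open T \<eta> = {\<nu> \<in> lim T. init_seg \<eta> \<nu>}"

definition open_lim :: "'a list set \<Rightarrow> (nat \<Rightarrow> 'a) set \<Rightarrow> bool" where
  "open_lim T U \<longleftrightarrow> (\<exists>S \<subseteq> T. U = (\<Union>\<eta>\<in>S. basic_open T \<eta>))"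

definition borel_lim :: "'a list set \<Rightarrow> (nat \<Rightarrow> 'a) set \<Rightarrow> bool" where
  "borel_lim T B \<longleftrightarrow> B \<in> sigma_sets (lim T) {U. open_lim T U}"

definition is_ideal :: "'b set \<Rightarrow> 'b set set \<Rightarrow> bool" where
  "is_ideal X I \<longleftrightarrow> I \<subseteq> Pow X \<and> (\<forall>x\<in>X. {x} \<in> I)
     \<and> (\<forall>A\<in>I. \<forall>B. B \<subseteq> A \<longrightarrow> B \<in> I)
     \<and> (\<forall>A\<in>I. \<forall>B\<in>I. A \<union> B \<in> I) \<and> X \<notin> I"

definition card_le :: "'b set \<Rightarrow> 'c set \<Rightarrow> bool" where
  "card_le A L \<longleftrightarrow> (\<exists>f. inj_on f A \<and> f ` A \<subseteq> L)"

text \<open>lambda^+-complete where lambda = |L|: closed under unions of at most |L| members.\<close>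
definition complete_plus :: "'c set \<Rightarrow> 'b set set \<Rightarrow> bool" where
  "complete_plus L I \<longleftrightarrow> (\<forall>F \<subseteq> I. card_le F L \<longrightarrow> \<Union>F \<in> I)"

text \<open>A tag assignment: Ibar eta = Some (Dom, I) when I_eta is defined (an ideal on Dom).\<close>
type_synonym 'a tags = "'a list \<Rightarrow> ('a list set \<times> 'a list set set) option"

definition tagged_tree :: "'a list set \<Rightarrow> 'a tags \<Rightarrow> bool" where
  "tagged_tree T Ib \<longleftrightarrow> is_tree T \<and>
     (\<forall>\<eta>\<in>T. \<forall>D I. Ib \<eta> = Some (D, I) \<longrightarrow> is_ideal D I \<and> Succ T \<eta> \<subseteq> D)"

definition tagged_complete :: "'c set \<Rightarrow> 'a list set \<Rightarrow> 'a tags \<Rightarrow> bool" where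
  "tagged_complete L T Ib \<longleftrightarrow>
     (\<forall>\<eta>\<in>T. \<forall>D I. Ib \<eta> = Some (D, I) \<longrightarrow> complete_plus L I)"

definition splitting :: "'a list set \<Rightarrow> 'a tags \<Rightarrow> 'a list \<Rightarrow> bool" where
  "splitting T Ib \<eta> \<longleftrightarrow> \<eta> \<in> T \<and> (\<exists>D I. Ib \<eta> = Some (D, I) \<and> Succ T \<eta> \<notin> I)"

definition le_star :: "'a list set \<Rightarrow> 'a tags \<Rightarrow> 'a list set \<Rightarrow> bool" where
  "le_star T Ib T' \<longleftrightarrow> T' \<subseteq> T \<and>
     (\<forall>\<eta>\<in>T'. splitting T Ib \<eta> \<longrightarrow> Succ T' \<eta> \<notin> snd (the (Ib \<eta>)))"

end

theory Submission
  imports Defs "HOL-Library.Nat_Bijection"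
begin

text \<open>Every Borel subset of \<open>lim T\<close>, and its complement, is a Souslin set: \<open>\<nu>\<close> belongs to it
  iff some witness sequence \<open>w\<close> keeps all finite stages \<open>(\<nu>\<restriction>n, w\<restriction>(n+1))\<close> inside a fixed
  set \<open>Q\<close>. So \<open>lim T = \<Union>\<^sub>i B\<^sub>i\<close> is a single Souslin set whose witnesses start by naming
  an index \<open>i\<close>. In the game where player I discards negligible sets of successors and player II
  supplies the witness, either player I cannot force some opening \<open>(i, _)\<close> out of \<open>Q\<close> -- then
  player II's greedy answers survive along a pruned subtree whose branches all lie in \<open>B\<^sub>i\<close> --
  or player I forces every opening out. In the latter case, by \<open>\<lambda>\<^sup>+\<close>-completeness, the at most
  \<open>\<lambda>\<close> many sets discarded at a node by all his winning strategies together are still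
  negligible, and discarding them leaves a subtree without any branch, which is absurd.
  The second claim follows by covering \<open>lim T\<close> with the fibres of \<open>H\<close>.\<close>

section \<open>Trees and branches\<close>

abbreviation stem :: "(nat \<Rightarrow> 'x) \<Rightarrow> nat \<Rightarrow> 'x list" where
  "stem \<nu> n \<equiv> map \<nu> [0..<n]"

lemma take_stem: "m \<le> n \<Longrightarrow> take m (stem \<nu> n) = stem \<nu> m"
  by (simp add: take_map)

lemma is_tree_take: "is_tree T \<Longrightarrow> \<eta> \<in> T \<Longrightarrow> take n \<eta> \<in> T"
  unfolding is_tree_def by blast

lemma is_tree_Nil: "is_tree T \<Longrightarrow> [] \<in> T"
  unfolding is_tree_def by (metis all_not_in_conv take_0)

lemma Succ_nonempty: "is_tree T \<Longrightarrow> \<eta> \<in> T \<Longrightarrow> Succ T \<eta> \<noteq> {}"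
  unfolding is_tree_def Succ_def by blast

lemma lim_mono: "S \<subseteq> T \<Longrightarrow> lim S \<subseteq> lim T"
  unfolding lim_def by blast

lemma lim_nonempty:
  assumes "is_tree S"
  shows "lim S \<noteq> {}"
proof -
  define extend where "extend \<eta> = \<eta> @ [SOME a. \<eta> @ [a] \<in> S]" for \<eta>
  have extend: "extend \<eta> \<in> S" if "\<eta> \<in> S" for \<eta>
    using someI_ex[of "\<lambda>a. \<eta> @ [a] \<in> S"] assms that unfolding is_tree_def extend_def by blast
  define path where "path n = (extend ^^ n) []" for n
  have path_Suc: "path (Suc n) = path n @ [SOME a. path n @ [a] \<in> S]" for n
    by (simp add: path_def extend_def)
  have path_S: "path n \<in> S" for n
    by (induction n) (simp_all add: path_def is_tree_Nil[OF assms] extend)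
  have path_length: "length (path n) = n" for n
    by (induction n) (simp_all add: path_Suc, simp add: path_def)
  define \<nu> where "\<nu> n = path (Suc n) ! n" for n
  have "stem \<nu> n = path n" for n
  proof (induction n)
    case 0 then show ?case using path_length[of 0] by simp
  next
    case (Suc n)
    have "\<nu> n = (SOME a. path n @ [a] \<in> S)"
      unfolding \<nu>_def path_Suc using path_length[of n] by (simp add: nth_append)
    then show ?case using Suc path_Suc by simp
  qed
  then have "\<nu> \<in> lim S" unfolding lim_def using path_S by simp
  then show ?thesis by blast
qed

lemma tagged_tree_is_tree: "tagged_tree T Ib \<Longrightarrow> is_tree T"
  unfolding tagged_tree_def by blast

lemma is_ideal_subset: "is_ideal D I \<Longrightarrow> A \<in> I \<Longrightarrow> B \<subseteq> A \<Longrightarrow> B \<in> I"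
  unfolding is_ideal_def by blast

lemma is_ideal_Un: "is_ideal D I \<Longrightarrow> A \<in> I \<Longrightarrow> B \<in> I \<Longrightarrow> A \<union> B \<in> I"
  unfolding is_ideal_def by blast

lemma splittingE:
  assumes "tagged_tree T Ib" "splitting T Ib \<eta>"
  obtains D I where "snd (the (Ib \<eta>)) = I" "is_ideal D I" "Succ T \<eta> \<notin> I"
    "\<eta> \<in> T" "Ib \<eta> = Some (D, I)"
  using assms unfolding splitting_def tagged_tree_def by force

text \<open>Ideals contain the singletons of the nonempty set \<open>Succ T \<eta>\<close>, hence also \<open>{}\<close>.\<close>
lemma splitting_empty_in_ideal:
  assumes "tagged_tree T Ib" "splitting T Ib \<eta>"
  shows "{} \<in> snd (the (Ib \<eta>))"
proof -
  obtain D I where I: "snd (the (Ib \<eta>)) = I" "is_ideal D I" "\<eta> \<in> T" "Ib \<eta> = Some (D, I)"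
    using splittingE[OF assms] by metis
  obtain x where x: "x \<in> Succ T \<eta>"
    using Succ_nonempty[OF tagged_tree_is_tree[OF assms(1)] I(3)] by blast
  have "Succ T \<eta> \<subseteq> D"
    using assms(1) I(3,4) unfolding tagged_tree_def by blast
  with x I(2) have "{x} \<in> I"
    unfolding is_ideal_def by blast
  with I show ?thesis using is_ideal_subset by blast
qed

lemma splitting_Succ_Diff_notin:
  assumes "tagged_tree T Ib" "splitting T Ib \<eta>" "E \<in> snd (the (Ib \<eta>))"
  shows "Succ T \<eta> - E \<notin> snd (the (Ib \<eta>))"
proof
  assume "Succ T \<eta> - E \<in> snd (the (Ib \<eta>))"
  moreover obtain D I where I: "snd (the (Ib \<eta>)) = I" "is_ideal D I" "Succ T \<eta> \<notin> I"
    using splittingE[OF assms(1,2)] by metis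
  ultimately have "(Succ T \<eta> - E) \<union> E \<in> I"
    using assms(3) is_ideal_Un by metis
  then have "Succ T \<eta> \<in> I"
    using is_ideal_subset[OF I(2)] by blast
  with I(3) show False ..
qed

text \<open>The sets of successors that may be discarded at \<open>\<eta>\<close> when pruning: members of the
  ideal at splitting points, and nothing elsewhere.\<close>
definition negligible :: "'a list set \<Rightarrow> 'a tags \<Rightarrow> 'a list \<Rightarrow> 'a list set \<Rightarrow> bool" where
  "negligible T Ib \<eta> E \<longleftrightarrow> (if splitting T Ib \<eta> then E \<in> snd (the (Ib \<eta>)) else E = {})"

lemma negligible_empty: "tagged_tree T Ib \<Longrightarrow> negligible T Ib \<eta> {}"
  unfolding negligible_def using splitting_empty_in_ideal by auto

lemma negligible_subset:
  assumes "tagged_tree T Ib" "negligible T Ib \<eta> E" "F \<subseteq> E"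
  shows "negligible T Ib \<eta> F"
proof (cases "splitting T Ib \<eta>")
  case True
  then obtain D I where "snd (the (Ib \<eta>)) = I" "is_ideal D I"
    using splittingE[OF assms(1)] by metis
  with True assms(2,3) show ?thesis
    unfolding negligible_def using is_ideal_subset by metis
qed (use assms(2,3) in \<open>auto simp: negligible_def\<close>)

lemma not_negligible_Succ_Diff:
  assumes "tagged_tree T Ib" "\<eta> \<in> T" "negligible T Ib \<eta> E"
  shows "\<not> negligible T Ib \<eta> (Succ T \<eta> - E)"
proof (cases "splitting T Ib \<eta>")
  case True
  with assms show ?thesis
    unfolding negligible_def using splitting_Succ_Diff_notin by metis
next
  case False
  with assms show ?thesis
    unfolding negligible_def using Succ_nonempty tagged_tree_is_tree by auto
qed

lemma negligible_Union:
  assumes "tagged_tree T Ib" "tagged_complete L T Ib" "card_le F L"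
    and "\<And>E. E \<in> F \<Longrightarrow> negligible T Ib \<eta> E"
  shows "negligible T Ib \<eta> (\<Union>F)"
proof (cases "splitting T Ib \<eta>")
  case True
  then obtain D I where "snd (the (Ib \<eta>)) = I" "\<eta> \<in> T" "Ib \<eta> = Some (D, I)"
    using splittingE[OF assms(1)] by metis
  then have "complete_plus L (snd (the (Ib \<eta>)))"
    using assms(2) unfolding tagged_complete_def by auto
  with True assms(3,4) show ?thesis
    unfolding negligible_def complete_plus_def by (simp add: subset_iff)
qed (use assms(4) in \<open>auto simp: negligible_def\<close>)

lemma pruned_subtree:
  assumes "tagged_tree T Ib" "S \<subseteq> T" "[] \<in> S"
    and take_closed: "\<And>\<eta> n. \<eta> \<in> S \<Longrightarrow> take n \<eta> \<in> S"
    and large: "\<And>\<eta>. \<eta> \<in> S \<Longrightarrow> \<not> negligible T Ib \<eta> (Succ S \<eta>)"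
  shows "is_tree S \<and> le_star T Ib S"
proof
  have "Succ S \<eta> \<noteq> {}" if "\<eta> \<in> S" for \<eta>
    using large[OF that] negligible_empty[OF assms(1)] by metis
  then show "is_tree S"
    unfolding is_tree_def Succ_def using assms(3) take_closed by blast
  show "le_star T Ib S"
    unfolding le_star_def using assms(2) large unfolding negligible_def by fastforce
qed

context includes cardinal_syntax
begin

lemma card_le_iff_ordLeq: "card_le A B \<longleftrightarrow> |A| \<le>o |B|"
  unfolding card_le_def card_of_ordLeq[symmetric] by blast

lemma card_le_image: "card_le A L \<Longrightarrow> card_le (g ` A) L"
  unfolding card_le_iff_ordLeq using card_of_image ordLeq_transitive by blast

lemma card_le_subset: "card_le A L \<Longrightarrow> B \<subseteq> A \<Longrightarrow> card_le B L"
  unfolding card_le_iff_ordLeq using card_of_mono1 ordLeq_transitive by blast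

lemma card_le_Times_infinite:
  "infinite L \<Longrightarrow> card_le A L \<Longrightarrow> card_le B L \<Longrightarrow> card_le (A \<times> B) L"
  unfolding card_le_iff_ordLeq
  by (intro card_of_Times_ordLeq_infinite_Field) (simp_all add: Field_card_of card_of_card_order_on)

lemma card_le_nat_infinite: "infinite L \<Longrightarrow> card_le (UNIV :: nat set) L"
  unfolding card_le_iff_ordLeq using infinite_iff_card_of_nat by blast

lemma card_le_lists_length:
  assumes "infinite L" "card_le W L"
  shows "card_le {t \<in> lists W. length t = n} L"
proof (induction n)
  case 0
  obtain i where "i \<in> L" using assms(1) by (metis ex_in_conv finite.emptyI)
  then have "inj_on (\<lambda>_. i) {t \<in> lists W. length t = 0}" "(\<lambda>_. i) ` {t \<in> lists W. length t = 0} \<subseteq> L"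
    by (auto intro: inj_onI)
  then show ?case unfolding card_le_def by blast
next
  case (Suc n)
  have "card_le ((\<lambda>(x, t). x # t) ` (W \<times> {t \<in> lists W. length t = n})) L"
    using card_le_image card_le_Times_infinite[OF assms Suc] by blast
  moreover have "{t \<in> lists W. length t = Suc n} \<subseteq> (\<lambda>(x, t). x # t) ` (W \<times> {t \<in> lists W. length t = n})"
    by (auto simp: length_Suc_conv)
  ultimately show ?case by (rule card_le_subset)
qed

end

section \<open>Souslin representations\<close>

text \<open>The projection to \<open>lim T\<close> of the closed subset of \<open>lim T \<times> W\<^sup>\<omega>\<close> determined by \<open>Q\<close>.\<close>
definition suslin :: "'a list set \<Rightarrow> 'w set \<Rightarrow> ('a list \<times> 'w list) set \<Rightarrow> (nat \<Rightarrow> 'a) set" where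
  "suslin T W Q = {\<nu> \<in> lim T. \<exists>w. (\<forall>n. w n \<in> W) \<and> (\<forall>n. (stem \<nu> n, stem w (Suc n)) \<in> Q)}"

definition is_suslin :: "'a list set \<Rightarrow> (nat \<Rightarrow> 'a) set \<Rightarrow> bool" where
  "is_suslin T X \<longleftrightarrow> (\<exists>Q :: ('a list \<times> nat list) set. X = suslin T UNIV Q)"

lemma mem_suslin_UNIV:
  "\<nu> \<in> suslin T UNIV Q \<longleftrightarrow> \<nu> \<in> lim T \<and> (\<exists>w. \<forall>n. (stem \<nu> n, stem w (Suc n)) \<in> Q)"
  unfolding suslin_def by simp

lemma is_suslin_subset_lim: "is_suslin T X \<Longrightarrow> X \<subseteq> lim T"
  unfolding is_suslin_def suslin_def by blast

lemma suslin_map_witness: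
  assumes "surj g"
  shows "suslin T UNIV {(\<eta>, s). (\<eta>, map g s) \<in> Q} = suslin T UNIV Q"
proof (intro set_eqI iffI)
  fix \<nu> assume "\<nu> \<in> suslin T UNIV {(\<eta>, s). (\<eta>, map g s) \<in> Q}"
  then obtain w where "\<nu> \<in> lim T" "\<forall>n. (stem \<nu> n, stem (g \<circ> w) (Suc n)) \<in> Q"
    unfolding mem_suslin_UNIV by (auto simp del: upt_Suc)
  then show "\<nu> \<in> suslin T UNIV Q" unfolding mem_suslin_UNIV by blast
next
  fix \<nu> assume "\<nu> \<in> suslin T UNIV Q"
  then obtain w where "\<nu> \<in> lim T" "\<forall>n. (stem \<nu> n, stem w (Suc n)) \<in> Q"
    unfolding mem_suslin_UNIV by blast
  moreover have "map g (stem (inv g \<circ> w) n) = stem w n" for n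
    by (simp add: surj_f_inv_f[OF assms])
  ultimately show "\<nu> \<in> suslin T UNIV {(\<eta>, s). (\<eta>, map g s) \<in> Q}"
    unfolding mem_suslin_UNIV mem_Collect_eq case_prod_conv by metis
qed

lemma is_suslin_suslin_nat_pairs: "is_suslin T (suslin T (UNIV :: (nat \<times> nat) set) Q)"
  unfolding is_suslin_def using suslin_map_witness[OF surj_prod_decode, of T Q] by blast

text \<open>The first coordinate of the witness names the member of the union; it must stay constant.\<close>
definition union_code :: "('i \<Rightarrow> ('a list \<times> 'w list) set) \<Rightarrow> ('a list \<times> ('i \<times> 'w) list) set" where
  "union_code Qf = {(\<eta>, s). s \<noteq> [] \<and> (\<forall>x\<in>set s. fst x = fst (hd s)) \<and> (\<eta>, map snd s) \<in> Qf (fst (hd s))}"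

lemma union_code_witness_iff:
  "(\<forall>n. (stem \<nu> n, stem w (Suc n)) \<in> union_code Qf) \<longleftrightarrow>
   (\<forall>n. fst (w n) = fst (w 0)) \<and> (\<forall>n. (stem \<nu> n, stem (snd \<circ> w) (Suc n)) \<in> Qf (fst (w 0)))"
proof -
  have "(stem \<nu> n, stem w (Suc n)) \<in> union_code Qf \<longleftrightarrow>
    (\<forall>m<Suc n. fst (w m) = fst (w 0)) \<and> (stem \<nu> n, stem (snd \<circ> w) (Suc n)) \<in> Qf (fst (w 0))" for n
    unfolding union_code_def
    by (simp add: hd_map atLeast0LessThan del: upt_Suc) (simp only: Ball_def lessThan_iff)
  then show ?thesis using lessI by blast
qed

lemma suslin_UN:
  "(\<Union>i\<in>L. suslin T W (Qf i)) = suslin T (L \<times> W) (union_code Qf)"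
proof (intro set_eqI iffI)
  fix \<nu> assume "\<nu> \<in> (\<Union>i\<in>L. suslin T W (Qf i))"
  then obtain i w where "i \<in> L" "\<nu> \<in> lim T" "\<forall>n. w n \<in> W"
    "\<forall>n. (stem \<nu> n, stem w (Suc n)) \<in> Qf i"
    unfolding suslin_def by blast
  moreover have "snd \<circ> (\<lambda>n. (i, w n)) = w" by auto
  ultimately show "\<nu> \<in> suslin T (L \<times> W) (union_code Qf)"
    unfolding suslin_def union_code_witness_iff
    by (intro CollectI conjI exI[of _ "\<lambda>n. (i, w n)"]) auto
next
  fix \<nu> assume "\<nu> \<in> suslin T (L \<times> W) (union_code Qf)"
  then obtain w where "\<nu> \<in> lim T" "\<forall>n. w n \<in> L \<times> W"
    "\<forall>n. (stem \<nu> n, stem (snd \<circ> w) (Suc n)) \<in> Qf (fst (w 0))"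
    unfolding suslin_def union_code_witness_iff by blast
  then show "\<nu> \<in> (\<Union>i\<in>L. suslin T W (Qf i))"
    unfolding suslin_def
    by (intro UN_I[of "fst (w 0)"] CollectI conjI exI[of _ "snd \<circ> w"]) (auto simp: mem_Times_iff)
qed

lemma is_suslin_UN:
  assumes "\<And>n::nat. is_suslin T (A n)"
  shows "is_suslin T (\<Union>n. A n)"
proof -
  obtain Qf where "\<And>n. A n = suslin T UNIV (Qf n :: (_ \<times> nat list) set)"
    using assms unfolding is_suslin_def by metis
  then have "(\<Union>n. A n) = suslin T UNIV (union_code Qf)"
    using suslin_UN[where L = UNIV and W = UNIV and Qf = Qf and T = T] by simp
  then show ?thesis
    using is_suslin_suslin_nat_pairs by metis
qed

lemma prod_encode_mono_right: "i \<le> j \<Longrightarrow> prod_encode (n, i) \<le> prod_encode (n, j)"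
proof (induction j rule: dec_induct)
  case (step j) then show ?case by (simp add: prod_encode_def)
qed simp

lemma stem_nth_prod_encode:
  assumes "prod_encode (n, j) < m"
  shows "map (\<lambda>i. stem w m ! prod_encode (n, i)) [0..<Suc j] = stem (\<lambda>i. w (prod_encode (n, i))) (Suc j)"
proof (rule map_cong[OF refl])
  fix i assume "i \<in> set [0..<Suc j]"
  then have "prod_encode (n, i) < m"
    using prod_encode_mono_right[of i j n] assms by (simp del: upt_Suc)
  then show "stem w m ! prod_encode (n, i) = w (prod_encode (n, i))" by simp
qed

text \<open>The witness for the \<open>n\<close>-th set is read off at the positions \<open>prod_encode (n, i)\<close>;
  a finite stage only constrains the witnesses that are already determined at that stage.\<close>
definition inter_code :: "(nat \<Rightarrow> ('a list \<times> 'w list) set) \<Rightarrow> ('a list \<times> 'w list) set" where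
  "inter_code Qg = {(\<eta>, s). \<forall>n j. j \<le> length \<eta> \<longrightarrow> prod_encode (n, j) < length s \<longrightarrow>
     (take j \<eta>, map (\<lambda>i. s ! prod_encode (n, i)) [0..<Suc j]) \<in> Qg n}"

lemma suslin_INT: "(\<Inter>n. suslin T UNIV (Qg n)) = suslin T UNIV (inter_code Qg)"
proof (intro set_eqI iffI)
  fix \<nu> assume "\<nu> \<in> (\<Inter>n. suslin T UNIV (Qg n))"
  then have "\<nu> \<in> suslin T UNIV (Qg n)" for n by blast
  then have \<nu>: "\<nu> \<in> lim T" and "\<forall>n. \<exists>w. \<forall>m. (stem \<nu> m, stem w (Suc m)) \<in> Qg n"
    unfolding mem_suslin_UNIV by blast+
  then obtain wg where wg: "\<And>n m. (stem \<nu> m, stem (wg n) (Suc m)) \<in> Qg n"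
    using choice[of "\<lambda>n w. \<forall>m. (stem \<nu> m, stem w (Suc m)) \<in> Qg n"] by blast
  define w where "w k = wg (fst (prod_decode k)) (snd (prod_decode k))" for k
  have w_section: "(\<lambda>i. w (prod_encode (n, i))) = wg n" for n
    by (simp add: w_def)
  have "(stem \<nu> m, stem w (Suc m)) \<in> inter_code Qg" for m
    unfolding inter_code_def mem_Collect_eq case_prod_conv
  proof (intro allI impI)
    fix n j assume "j \<le> length (stem \<nu> m)" "prod_encode (n, j) < length (stem w (Suc m))"
    then show "(take j (stem \<nu> m), map (\<lambda>i. stem w (Suc m) ! prod_encode (n, i)) [0..<Suc j]) \<in> Qg n"
      using wg[of j n] by (simp only: length_map length_upt take_stem stem_nth_prod_encode w_section diff_zero)
  qed
  with \<nu> show "\<nu> \<in> suslin T UNIV (inter_code Qg)"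
    unfolding mem_suslin_UNIV by blast
next
  fix \<nu> assume "\<nu> \<in> suslin T UNIV (inter_code Qg)"
  then obtain w where \<nu>: "\<nu> \<in> lim T" and w: "\<And>m. (stem \<nu> m, stem w (Suc m)) \<in> inter_code Qg"
    unfolding mem_suslin_UNIV by blast
  have "(stem \<nu> j, stem (\<lambda>i. w (prod_encode (n, i))) (Suc j)) \<in> Qg n" for n j
  proof -
    define m where "m = j + prod_encode (n, j)"
    have "j \<le> length (stem \<nu> m)" "prod_encode (n, j) < length (stem w (Suc m))"
      by (simp_all add: m_def)
    then have "(take j (stem \<nu> m), map (\<lambda>i. stem w (Suc m) ! prod_encode (n, i)) [0..<Suc j]) \<in> Qg n"
      using w[of m] unfolding inter_code_def mem_Collect_eq case_prod_conv by blast
    moreover have "j \<le> m" "prod_encode (n, j) < Suc m" by (simp_all add: m_def)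
    ultimately show ?thesis
      by (simp only: take_stem stem_nth_prod_encode)
  qed
  with \<nu> have "\<nu> \<in> suslin T UNIV (Qg n)" for n
    unfolding mem_suslin_UNIV by blast
  then show "\<nu> \<in> (\<Inter>n. suslin T UNIV (Qg n))" by blast
qed

lemma is_suslin_INT:
  assumes "\<And>n::nat. is_suslin T (A n)"
  shows "is_suslin T (\<Inter>n. A n)"
proof -
  obtain Qg where "\<And>n. A n = suslin T UNIV (Qg n :: (_ \<times> nat list) set)"
    using assms unfolding is_suslin_def by metis
  then have "(\<Inter>n. A n) = suslin T UNIV (inter_code Qg)"
    using suslin_INT[of T Qg] by simp
  then show ?thesis unfolding is_suslin_def by blast
qed

lemma mem_UN_basic_open:
  "\<nu> \<in> (\<Union>\<eta>\<in>S0. basic_open T \<eta>) \<longleftrightarrow> \<nu> \<in> lim T \<and> (\<exists>m. stem \<nu> m \<in> S0)"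
proof
  assume "\<nu> \<in> (\<Union>\<eta>\<in>S0. basic_open T \<eta>)"
  then obtain \<eta> where "\<eta> \<in> S0" "\<nu> \<in> lim T" "stem \<nu> (length \<eta>) = \<eta>"
    unfolding basic_open_def init_seg_def by blast
  then show "\<nu> \<in> lim T \<and> (\<exists>m. stem \<nu> m \<in> S0)" by metis
next
  assume "\<nu> \<in> lim T \<and> (\<exists>m. stem \<nu> m \<in> S0)"
  then obtain m where "\<nu> \<in> basic_open T (stem \<nu> m)" "stem \<nu> m \<in> S0"
    unfolding basic_open_def init_seg_def by auto
  then show "\<nu> \<in> (\<Union>\<eta>\<in>S0. basic_open T \<eta>)" by blast
qed

text \<open>The constant witness \<open>m\<close> announces the stage at which \<open>\<nu>\<close> enters the open set.\<close>
lemma is_suslin_open: "is_suslin T (\<Union>\<eta>\<in>S0. basic_open T \<eta>)"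
proof -
  define Q where "Q = {(\<eta>, s::nat list). hd s \<le> length \<eta> \<longrightarrow> take (hd s) \<eta> \<in> S0}"
  have "(\<Union>\<eta>\<in>S0. basic_open T \<eta>) = suslin T UNIV Q"
  proof (intro set_eqI iffI)
    fix \<nu> assume "\<nu> \<in> (\<Union>\<eta>\<in>S0. basic_open T \<eta>)"
    then obtain m where "\<nu> \<in> lim T" "stem \<nu> m \<in> S0"
      unfolding mem_UN_basic_open by blast
    then show "\<nu> \<in> suslin T UNIV Q"
      unfolding mem_suslin_UNIV Q_def
      by (intro conjI exI[of _ "\<lambda>_. m"]) (auto simp: take_stem hd_map simp del: upt_Suc)
  next
    fix \<nu> assume "\<nu> \<in> suslin T UNIV Q"
    then obtain w where "\<nu> \<in> lim T" "(stem \<nu> (w 0), stem w (Suc (w 0))) \<in> Q"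
      unfolding mem_suslin_UNIV by blast
    then show "\<nu> \<in> (\<Union>\<eta>\<in>S0. basic_open T \<eta>)"
      unfolding mem_UN_basic_open Q_def by (auto simp: hd_map simp del: upt_Suc)
  qed
  then show ?thesis unfolding is_suslin_def by blast
qed

lemma is_suslin_closed: "is_suslin T (lim T - (\<Union>\<eta>\<in>S0. basic_open T \<eta>))"
proof -
  define Q where "Q = {(\<eta>, s::nat list). \<forall>m\<le>length \<eta>. take m \<eta> \<notin> S0}"
  have "\<nu> \<in> lim T - (\<Union>\<eta>\<in>S0. basic_open T \<eta>) \<longleftrightarrow> \<nu> \<in> suslin T UNIV Q" for \<nu>
    unfolding mem_suslin_UNIV Diff_iff mem_UN_basic_open Q_def
    by (auto simp: take_stem simp del: upt_Suc)
  then show ?thesis unfolding is_suslin_def by blast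
qed

lemma borel_lim_is_suslin:
  assumes "borel_lim T B"
  shows "is_suslin T B \<and> is_suslin T (lim T - B)"
  using assms[unfolded borel_lim_def]
proof (induction rule: sigma_sets.induct)
  case (Basic U)
  then show ?case
    unfolding open_lim_def using is_suslin_open is_suslin_closed by blast
next
  case Empty
  have "{} = suslin T UNIV {}" "lim T - {} = suslin T UNIV UNIV"
    unfolding suslin_def by auto
  then show ?case unfolding is_suslin_def by blast
next
  case (Compl U)
  then have "lim T - (lim T - U) = U" using is_suslin_subset_lim by blast
  with Compl show ?case by simp
next
  case (Union U)
  have "lim T - (\<Union>i. U i) = (\<Inter>i. lim T - U i)" by blast
  with Union show ?case using is_suslin_UN is_suslin_INT by metis
qed

section \<open>The pruning game\<close>

text \<open>Player I builds a branch and player II a witness sequence, both one step at a time; at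
  each node player I may first discard a negligible set of successors. \<open>forces_out\<close> holds
  at the positions from which player I can force a stage outside \<open>Q\<close> in finitely many moves.\<close>
inductive forces_out :: "'a list set \<Rightarrow> 'a tags \<Rightarrow> 'w set \<Rightarrow> ('a list \<times> 'w list) set
    \<Rightarrow> 'a list \<Rightarrow> 'w list \<Rightarrow> bool"
  for T Ib W Q where
  exit: "(\<eta>, s) \<notin> Q \<Longrightarrow> forces_out T Ib W Q \<eta> s"
| move: "negligible T Ib \<eta> E \<Longrightarrow>
    (\<And>\<eta>' k. \<eta>' \<in> Succ T \<eta> - E \<Longrightarrow> k \<in> W \<Longrightarrow> forces_out T Ib W Q \<eta>' (s @ [k])) \<Longrightarrow>
    forces_out T Ib W Q \<eta> s"

definition legal_strategy :: "'a list set \<Rightarrow> 'a tags \<Rightarrow> ('a list \<Rightarrow> 'w list \<Rightarrow> 'a list set) \<Rightarrow> bool" where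
  "legal_strategy T Ib \<sigma> \<longleftrightarrow> (\<forall>\<eta> s. negligible T Ib \<eta> (\<sigma> \<eta> s))"

definition wins_from :: "'a list set \<Rightarrow> 'w set \<Rightarrow> ('a list \<times> 'w list) set
    \<Rightarrow> ('a list \<Rightarrow> 'w list \<Rightarrow> 'a list set) \<Rightarrow> 'a list \<Rightarrow> 'w list \<Rightarrow> bool" where
  "wins_from T W Q \<sigma> \<eta> s \<longleftrightarrow> (\<forall>\<nu> w. \<nu> \<in> lim T \<longrightarrow> stem \<nu> (length \<eta>) = \<eta> \<longrightarrow>
     stem w (Suc (length \<eta>)) = s \<longrightarrow> (\<forall>n. w n \<in> W) \<longrightarrow>
     (\<forall>n\<ge>length \<eta>. stem \<nu> (Suc n) \<notin> \<sigma> (stem \<nu> n) (stem w (Suc n))) \<longrightarrow>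
     (\<exists>n\<ge>length \<eta>. (stem \<nu> n, stem w (Suc n)) \<notin> Q))"

lemma legal_strategy_empty: "tagged_tree T Ib \<Longrightarrow> legal_strategy T Ib (\<lambda>_ _. {})"
  unfolding legal_strategy_def using negligible_empty by blast

text \<open>Player I discards \<open>E\<close> at \<open>\<eta>\<close> and then follows, below each surviving successor
  \<open>\<eta>'\<close> and answer \<open>k\<close>, a strategy winning from \<open>(\<eta>', s @ [k])\<close>.\<close>
lemma wins_from_move:
  assumes tt: "tagged_tree T Ib" and E: "negligible T Ib \<eta> E"
    and IH: "\<And>\<eta>' k. \<eta>' \<in> Succ T \<eta> - E \<Longrightarrow> k \<in> W \<Longrightarrow>
               \<exists>\<sigma>. legal_strategy T Ib \<sigma> \<and> wins_from T W Q \<sigma> \<eta>' (s @ [k])"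
  shows "\<exists>\<sigma>. legal_strategy T Ib \<sigma> \<and> wins_from T W Q \<sigma> \<eta> s"
proof -
  have "\<exists>\<sigma>. legal_strategy T Ib \<sigma> \<and>
      (\<eta>' \<in> Succ T \<eta> - E \<longrightarrow> k \<in> W \<longrightarrow> wins_from T W Q \<sigma> \<eta>' (s @ [k]))" for \<eta>' k
    using IH legal_strategy_empty[OF tt] by blast
  then obtain sub where sub_legal: "\<And>\<eta>' k. legal_strategy T Ib (sub \<eta>' k)"
    and sub_wins: "\<And>\<eta>' k. \<eta>' \<in> Succ T \<eta> - E \<Longrightarrow> k \<in> W \<Longrightarrow> wins_from T W Q (sub \<eta>' k) \<eta>' (s @ [k])"
    by metis
  define m where "m = length \<eta>"
  define \<sigma> where "\<sigma> \<mu> t = (if \<mu> = \<eta> then E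
    else if m < length \<mu> then sub (take (Suc m) \<mu>) (t ! Suc m) \<mu> t else {})" for \<mu> t
  have "legal_strategy T Ib \<sigma>"
    using E sub_legal negligible_empty[OF tt] unfolding legal_strategy_def \<sigma>_def by simp
  moreover have "wins_from T W Q \<sigma> \<eta> s"
    unfolding wins_from_def
  proof (intro allI impI)
    fix \<nu> w
    assume \<nu>: "\<nu> \<in> lim T" and \<nu>\<eta>: "stem \<nu> (length \<eta>) = \<eta>" and ws: "stem w (Suc (length \<eta>)) = s"
      and W: "\<forall>n. w n \<in> W"
      and avoids: "\<forall>n\<ge>length \<eta>. stem \<nu> (Suc n) \<notin> \<sigma> (stem \<nu> n) (stem w (Suc n))"
    define \<eta>' where "\<eta>' = stem \<nu> (Suc m)"
    define k where "k = w (Suc m)"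
    have "\<eta>' \<in> T"
      using \<nu> unfolding lim_def \<eta>'_def by blast
    moreover have "\<eta>' = \<eta> @ [\<nu> m]"
      using \<nu>\<eta> unfolding \<eta>'_def m_def by simp
    ultimately have "\<eta>' \<in> Succ T \<eta>"
      unfolding Succ_def by blast
    moreover have "\<eta>' \<notin> E"
      using avoids \<nu>\<eta> unfolding \<eta>'_def m_def \<sigma>_def by auto
    ultimately have wins': "wins_from T W Q (sub \<eta>' k) \<eta>' (s @ [k])"
      using sub_wins W k_def by blast
    have len: "length \<eta>' = Suc m" by (simp add: \<eta>'_def)
    have avoids': "\<forall>n\<ge>length \<eta>'. stem \<nu> (Suc n) \<notin> sub \<eta>' k (stem \<nu> n) (stem w (Suc n))"
    proof (intro allI impI)
      fix n assume "length \<eta>' \<le> n"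
      then have that: "Suc m \<le> n" by (simp add: len)
      have "take (Suc m) (stem \<nu> n) = \<eta>'" "stem w (Suc n) ! Suc m = k" "stem \<nu> n \<noteq> \<eta>"
        using that \<nu>\<eta> take_stem[OF that] unfolding \<eta>'_def k_def m_def by (auto simp del: upt_Suc)
      with that have "\<sigma> (stem \<nu> n) (stem w (Suc n)) = sub \<eta>' k (stem \<nu> n) (stem w (Suc n))"
        unfolding \<sigma>_def m_def by (simp del: upt_Suc)
      moreover have "stem \<nu> (Suc n) \<notin> \<sigma> (stem \<nu> n) (stem w (Suc n))"
        using avoids[rule_format, of n] that unfolding m_def by (simp del: upt_Suc)
      ultimately show "stem \<nu> (Suc n) \<notin> sub \<eta>' k (stem \<nu> n) (stem w (Suc n))" by simp
    qed
    have "stem \<nu> (length \<eta>') = \<eta>'" "stem w (Suc (length \<eta>')) = s @ [k]"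
      using ws unfolding \<eta>'_def k_def m_def by simp_all
    from wins'[unfolded wins_from_def, rule_format, OF \<nu> this W[rule_format] avoids'[rule_format]]
    obtain n where "n \<ge> length \<eta>'" "(stem \<nu> n, stem w (Suc n)) \<notin> Q" by blast
    then show "\<exists>n\<ge>length \<eta>. (stem \<nu> n, stem w (Suc n)) \<notin> Q"
      using len unfolding m_def by (intro exI[of _ n]) auto
  qed
  ultimately show ?thesis by blast
qed

lemma forces_out_winning_strategy:
  assumes "tagged_tree T Ib" "forces_out T Ib W Q \<eta> s"
  shows "\<exists>\<sigma>. legal_strategy T Ib \<sigma> \<and> wins_from T W Q \<sigma> \<eta> s"
  using assms(2)
proof (induction rule: forces_out.induct)
  case (exit \<eta> s)
  then have "wins_from T W Q (\<lambda>_ _. {}) \<eta> s"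
    unfolding wins_from_def by (metis order_refl)
  then show ?case using legal_strategy_empty[OF assms(1)] by blast
next
  case (move \<eta> E s)
  then show ?case using wins_from_move[OF assms(1)] by blast
qed

lemma prune_avoiding_suslin:
  assumes tt: "tagged_tree T Ib" and tc: "tagged_complete L T Ib" and "infinite L"
    and "card_le W L" and forced: "\<And>x. x \<in> W \<Longrightarrow> forces_out T Ib W Q [] [x]"
  shows "\<exists>S. is_tree S \<and> le_star T Ib S \<and> lim S \<inter> suslin T W Q = {}"
proof -
  have "\<exists>\<sigma>. legal_strategy T Ib \<sigma> \<and> (x \<in> W \<longrightarrow> wins_from T W Q \<sigma> [] [x])" for x
    using forced forces_out_winning_strategy[OF tt] legal_strategy_empty[OF tt] by blast
  then obtain \<sigma> where legal: "\<And>x. legal_strategy T Ib (\<sigma> x)"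
    and wins: "\<And>x. x \<in> W \<Longrightarrow> wins_from T W Q (\<sigma> x) [] [x]"
    by metis
  define U where "U \<eta> = (\<Union>t \<in> {t \<in> lists W. length t = Suc (length \<eta>)}. \<sigma> (hd t) \<eta> t)" for \<eta>
  have U_negligible: "negligible T Ib \<eta> (U \<eta>)" for \<eta>
    unfolding U_def
    by (rule negligible_Union[OF tt tc card_le_image[OF card_le_lists_length[OF assms(3,4)]]])
      (use legal in \<open>auto simp: legal_strategy_def\<close>)
  define S where "S = {\<eta> \<in> T. \<forall>n < length \<eta>. take (Suc n) \<eta> \<notin> U (take n \<eta>)}"
  have Succ_S: "Succ T \<eta> - U \<eta> \<subseteq> Succ S \<eta>" if "\<eta> \<in> S" for \<eta>
    using that unfolding S_def Succ_def by (auto simp: nth_append less_Suc_eq)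
  have "is_tree S \<and> le_star T Ib S"
  proof (rule pruned_subtree[OF tt])
    show "[] \<in> S" using is_tree_Nil[OF tagged_tree_is_tree[OF tt]] by (simp add: S_def)
    show "take n \<eta> \<in> S" if "\<eta> \<in> S" for \<eta> n
      using that is_tree_take[OF tagged_tree_is_tree[OF tt]] by (auto simp: S_def)
    show "\<not> negligible T Ib \<eta> (Succ S \<eta>)" if "\<eta> \<in> S" for \<eta>
      using not_negligible_Succ_Diff[OF tt _ U_negligible] negligible_subset[OF tt _ Succ_S[OF that]]
        that unfolding S_def by blast
  qed (auto simp: S_def)
  moreover have "lim S \<inter> suslin T W Q = {}"
  proof (rule ccontr)
    assume "lim S \<inter> suslin T W Q \<noteq> {}"
    then obtain \<nu> w where \<nu>: "\<nu> \<in> lim S" "\<nu> \<in> lim T" and W: "\<forall>n. w n \<in> W"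
      and in_Q: "\<forall>n. (stem \<nu> n, stem w (Suc n)) \<in> Q"
      unfolding suslin_def by blast
    have "stem \<nu> (Suc n) \<notin> \<sigma> (w 0) (stem \<nu> n) (stem w (Suc n))" for n
    proof -
      have "stem \<nu> (Suc n) \<in> S" using \<nu>(1) unfolding lim_def by blast
      then have "stem \<nu> (Suc n) \<notin> U (stem \<nu> n)"
        unfolding S_def by (auto simp: take_stem simp del: upt_Suc dest: spec[of _ n])
      moreover have "\<sigma> (w 0) (stem \<nu> n) (stem w (Suc n)) \<subseteq> U (stem \<nu> n)"
      proof -
        have "stem w (Suc n) \<in> {t \<in> lists W. length t = Suc (length (stem \<nu> n))}"
          using W by auto
        then have "\<sigma> (hd (stem w (Suc n))) (stem \<nu> n) (stem w (Suc n)) \<subseteq> U (stem \<nu> n)"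
          unfolding U_def by (rule UN_upper)
        then show ?thesis by (simp add: hd_map del: upt_Suc)
      qed
      ultimately show ?thesis by blast
    qed
    then obtain n where "(stem \<nu> n, stem w (Suc n)) \<notin> Q"
      using wins[unfolded wins_from_def, rule_format, of "w 0" \<nu> w] \<nu>(2) W by auto
    with in_Q show False by blast
  qed
  ultimately show ?thesis by blast
qed

lemma not_forces_out:
  assumes "\<not> forces_out T Ib W Q \<eta> s"
  shows "(\<eta>, s) \<in> Q"
    and "\<not> negligible T Ib \<eta> {\<eta>' \<in> Succ T \<eta>. \<exists>k \<in> W. \<not> forces_out T Ib W Q \<eta>' (s @ [k])}"
  using assms forces_out.exit forces_out.move[of T Ib \<eta> _ W Q s] by blast+

primrec greedy_word :: "('w list \<Rightarrow> 'a list \<Rightarrow> 'w) \<Rightarrow> 'w \<Rightarrow> nat \<Rightarrow> 'a list \<Rightarrow> 'w list" where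
  "greedy_word K x0 0 \<eta> = [x0]"
| "greedy_word K x0 (Suc n) \<eta> =
     greedy_word K x0 n \<eta> @ [K (greedy_word K x0 n \<eta>) (take (Suc n) \<eta>)]"

lemma length_greedy_word [simp]: "length (greedy_word K x0 n \<eta>) = Suc n"
  by (induction n) auto

lemma greedy_word_take: "n \<le> m \<Longrightarrow> greedy_word K x0 n (take m \<eta>) = greedy_word K x0 n \<eta>"
  by (induction n) (auto simp: min_def)

lemma nth_greedy_word: "i \<le> n \<Longrightarrow> greedy_word K x0 n \<eta> ! i = greedy_word K x0 i \<eta> ! i"
  by (induction n) (auto simp: nth_append le_Suc_eq)

lemma prune_inside_suslin:
  assumes tt: "tagged_tree T Ib" and "x0 \<in> W" and "\<not> forces_out T Ib W Q [] [x0]"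
  shows "\<exists>S. is_tree S \<and> le_star T Ib S \<and>
     (\<forall>\<nu>\<in>lim S. \<exists>w. w 0 = x0 \<and> (\<forall>n. w n \<in> W) \<and> (\<forall>n. (stem \<nu> n, stem w (Suc n)) \<in> Q))"
proof -
  define good where "good \<eta> s \<longleftrightarrow> \<eta> \<in> T \<and> set s \<subseteq> W \<and> \<not> forces_out T Ib W Q \<eta> s" for \<eta> s
  define K where "K s \<eta>' = (SOME k. k \<in> W \<and> \<not> forces_out T Ib W Q \<eta>' (s @ [k]))" for s \<eta>'
  define S where "S = {\<eta>. \<forall>n\<le>length \<eta>. good (take n \<eta>) (greedy_word K x0 n \<eta>)}"
  have good_S: "good \<eta> (greedy_word K x0 (length \<eta>) \<eta>)" if "\<eta> \<in> S" for \<eta>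
    using that unfolding S_def by auto
  have Succ_S: "{\<eta>' \<in> Succ T \<eta>. \<exists>k \<in> W. \<not> forces_out T Ib W Q \<eta>' (s @ [k])} \<subseteq> Succ S \<eta>"
    if "\<eta> \<in> S" and s: "s = greedy_word K x0 (length \<eta>) \<eta>" for \<eta> s
  proof
    fix \<eta>' assume "\<eta>' \<in> {\<eta>' \<in> Succ T \<eta>. \<exists>k \<in> W. \<not> forces_out T Ib W Q \<eta>' (s @ [k])}"
    then have "\<eta>' \<in> Succ T \<eta>" and ex: "\<exists>k. k \<in> W \<and> \<not> forces_out T Ib W Q \<eta>' (s @ [k])"
      by auto
    then obtain a where \<eta>': "\<eta>' = \<eta> @ [a]" "\<eta>' \<in> T"
      unfolding Succ_def by blast
    have K: "K s \<eta>' \<in> W" "\<not> forces_out T Ib W Q \<eta>' (s @ [K s \<eta>'])"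
      unfolding K_def using someI_ex[OF ex] by auto
    have "greedy_word K x0 n \<eta>' = greedy_word K x0 n \<eta>" if "n \<le> length \<eta>" for n
      using greedy_word_take[OF that, of K x0 \<eta>'] \<eta>'(1) by simp
    then have "greedy_word K x0 (Suc (length \<eta>)) \<eta>' = s @ [K s \<eta>']"
      using s \<eta>'(1) by simp
    moreover have "set s \<subseteq> W" using good_S[OF \<open>\<eta> \<in> S\<close>] s unfolding good_def by simp
    ultimately have "good \<eta>' (greedy_word K x0 (length \<eta>') \<eta>')"
      using \<eta>' K unfolding good_def by simp
    moreover have "good (take n \<eta>') (greedy_word K x0 n \<eta>')" if "n \<le> length \<eta>" for n
      using \<open>\<eta> \<in> S\<close> that \<open>n \<le> length \<eta> \<Longrightarrow> _\<close> \<eta>'(1) unfolding S_def by auto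
    ultimately have "\<eta>' \<in> S"
      unfolding S_def using \<eta>'(1) by (auto simp: le_Suc_eq)
    with \<eta>'(1) show "\<eta>' \<in> Succ S \<eta>" unfolding Succ_def by blast
  qed
  have "is_tree S \<and> le_star T Ib S"
  proof (rule pruned_subtree[OF tt])
    show "S \<subseteq> T" using good_S unfolding good_def by auto
    show "[] \<in> S"
      using is_tree_Nil[OF tagged_tree_is_tree[OF tt]] assms(2,3) by (simp add: S_def good_def)
    show "take n \<eta> \<in> S" if "\<eta> \<in> S" for \<eta> n
      using that unfolding S_def by (auto simp: greedy_word_take)
    show "\<not> negligible T Ib \<eta> (Succ S \<eta>)" if "\<eta> \<in> S" for \<eta>
      using not_forces_out(2) good_S[OF that] Succ_S[OF that refl] negligible_subset[OF tt]
      unfolding good_def by blast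
  qed
  moreover have "\<exists>w. w 0 = x0 \<and> (\<forall>n. w n \<in> W) \<and> (\<forall>n. (stem \<nu> n, stem w (Suc n)) \<in> Q)"
    if "\<nu> \<in> lim S" for \<nu>
  proof -
    define w where "w i = greedy_word K x0 i (stem \<nu> i) ! i" for i
    have stem_w: "stem w (Suc n) = greedy_word K x0 n (stem \<nu> n)" for n
    proof (rule nth_equalityI)
      fix i assume "i < length (stem w (Suc n))"
      then have "i \<le> n" by simp
      then have "greedy_word K x0 n (stem \<nu> n) ! i = greedy_word K x0 i (stem \<nu> n) ! i"
        by (rule nth_greedy_word)
      also have "\<dots> = w i"
        using greedy_word_take[of i i K x0 "stem \<nu> n"] take_stem[OF \<open>i \<le> n\<close>, of \<nu>]
        unfolding w_def by (simp del: upt_Suc)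
      finally show "stem w (Suc n) ! i = greedy_word K x0 n (stem \<nu> n) ! i"
        using \<open>i \<le> n\<close> by (simp del: upt_Suc)
    qed simp
    have good: "good (stem \<nu> n) (stem w (Suc n))" for n
      using good_S[of "stem \<nu> n"] that stem_w unfolding lim_def by simp
    have "w n \<in> W" for n
      using good[of n] unfolding good_def by auto
    moreover have "(stem \<nu> n, stem w (Suc n)) \<in> Q" for n
      using good[of n] not_forces_out(1) unfolding good_def by blast
    moreover have "w 0 = x0" by (simp add: w_def)
    ultimately show ?thesis by blast
  qed
  ultimately show ?thesis by blast
qed

lemma borel_cover_prune:
  fixes B :: "'i \<Rightarrow> (nat \<Rightarrow> 'a) set"
  assumes "infinite L" and tt: "tagged_tree T Ib" and "tagged_complete L T Ib"
    and cover: "lim T = (\<Union>i\<in>L. B i)" and borel: "\<And>i. i \<in> L \<Longrightarrow> borel_lim T (B i)"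
  shows "\<exists>i\<in>L. \<exists>T'. is_tree T' \<and> le_star T Ib T' \<and> lim T' \<subseteq> B i"
proof -
  have "\<forall>i\<in>L. \<exists>Q :: ('a list \<times> nat list) set. B i = suslin T UNIV Q"
    using borel borel_lim_is_suslin unfolding is_suslin_def by blast
  then obtain Qf :: "'i \<Rightarrow> ('a list \<times> nat list) set"
    where Qf: "\<And>i. i \<in> L \<Longrightarrow> B i = suslin T UNIV (Qf i)"
    using bchoice by metis
  define W where "W = L \<times> (UNIV :: nat set)"
  have "lim T = (\<Union>i\<in>L. suslin T UNIV (Qf i))"
    unfolding cover using Qf by (rule SUP_cong[OF refl])
  then have lim_T: "lim T = suslin T W (union_code Qf)"
    unfolding W_def suslin_UN .
  show ?thesis
  proof (cases "\<forall>x\<in>W. forces_out T Ib W (union_code Qf) [] [x]")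
    case True
    have "card_le L L" unfolding card_le_def by (intro exI[of _ id]) auto
    then have "card_le W L"
      unfolding W_def using card_le_Times_infinite[OF assms(1)] card_le_nat_infinite[OF assms(1)] by blast
    then obtain S where S: "is_tree S" "le_star T Ib S" "lim S \<inter> lim T = {}"
      using prune_avoiding_suslin[OF tt assms(3,1)] True unfolding lim_T by blast
    moreover have "lim S \<subseteq> lim T"
      using S(2) lim_mono unfolding le_star_def by blast
    ultimately show ?thesis
      using lim_nonempty[OF S(1)] by blast
  next
    case False
    then obtain x0 where x0: "x0 \<in> W" "\<not> forces_out T Ib W (union_code Qf) [] [x0]" by blast
    obtain S where S: "is_tree S" "le_star T Ib S" and witnessed: "\<And>\<nu>. \<nu> \<in> lim S \<Longrightarrow>
        \<exists>w. w 0 = x0 \<and> (\<forall>n. (stem \<nu> n, stem w (Suc n)) \<in> union_code Qf)"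
      using prune_inside_suslin[OF tt x0] by blast
    have "lim S \<subseteq> suslin T UNIV (Qf (fst x0))"
    proof
      fix \<nu> assume \<nu>: "\<nu> \<in> lim S"
      then have "\<nu> \<in> lim T"
        using S(2) lim_mono unfolding le_star_def by blast
      moreover obtain w where "w 0 = x0" "\<forall>n. (stem \<nu> n, stem w (Suc n)) \<in> union_code Qf"
        using witnessed[OF \<nu>] by blast
      ultimately show "\<nu> \<in> suslin T UNIV (Qf (fst x0))"
        unfolding mem_suslin_UNIV union_code_witness_iff by blast
    qed
    moreover have "fst x0 \<in> L" using x0(1) unfolding W_def by auto
    ultimately show ?thesis
      using S Qf by auto
  qed
qed

lemma borel_fibres_cover:
  assumes "card_le (H ` lim T) L" and "\<And>x. borel_lim T {\<nu> \<in> lim T. H \<nu> = x}"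
  obtains B where "lim T = (\<Union>i\<in>L. B i)" "\<And>i. i \<in> L \<Longrightarrow> borel_lim T (B i)"
    "\<And>i \<nu> \<nu>'. \<nu> \<in> B i \<Longrightarrow> \<nu>' \<in> B i \<Longrightarrow> H \<nu> = H \<nu>'"
proof -
  obtain f where f: "inj_on f (H ` lim T)" "f ` H ` lim T \<subseteq> L"
    using assms(1) unfolding card_le_def by blast
  define B where "B i = {\<nu> \<in> lim T. f (H \<nu>) = i}" for i
  have same_fibre: "H \<nu> = H \<nu>'" if "\<nu> \<in> B i" "\<nu>' \<in> B i" for i \<nu> \<nu>'
    using that f(1) unfolding B_def inj_on_def by auto
  have "borel_lim T (B i)" for i
  proof (cases "B i = {}")
    case True
    then show ?thesis unfolding borel_lim_def by (simp add: sigma_sets.Empty)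
  next
    case False
    then obtain \<nu>0 where "\<nu>0 \<in> B i" by blast
    then have "B i = {\<nu> \<in> lim T. H \<nu> = H \<nu>0}"
      using f(1) unfolding B_def inj_on_def by auto
    then show ?thesis using assms(2) by simp
  qed
  moreover have "lim T = (\<Union>i\<in>L. B i)"
    using f(2) unfolding B_def by blast
  ultimately show ?thesis using that same_fibre by blast
qed

theorem lemma1p7:
  fixes L :: "'i set" and T :: "'a list set" and Ib :: "'a tags"
  assumes "infinite L"
    and "tagged_tree T Ib"
    and "tagged_complete L T Ib"
  shows "(\<forall>B :: 'i \<Rightarrow> (nat \<Rightarrow> 'a) set.
            lim T = (\<Union>i\<in>L. B i) \<and> (\<forall>i\<in>L. borel_lim T (B i)) \<longrightarrow>
            (\<exists>i\<in>L. \<exists>T'. is_tree T' \<and> le_star T Ib T' \<and> lim T' \<subseteq> B i))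
       \<and> (\<forall>H :: (nat \<Rightarrow> 'a) \<Rightarrow> 'b.
            card_le (H ` lim T) L \<and> (\<forall>x. borel_lim T {\<nu> \<in> lim T. H \<nu> = x}) \<longrightarrow>
            (\<exists>T'. is_tree T' \<and> le_star T Ib T' \<and>
                  (\<exists>c. \<forall>\<nu>\<in>lim T'. H \<nu> = c)))"
proof (intro conjI allI impI; elim conjE)
  fix B :: "'i \<Rightarrow> (nat \<Rightarrow> 'a) set"
  assume cover: "lim T = (\<Union>i\<in>L. B i)" and borel: "\<forall>i\<in>L. borel_lim T (B i)"
  show "\<exists>i\<in>L. \<exists>T'. is_tree T' \<and> le_star T Ib T' \<and> lim T' \<subseteq> B i"
    by (rule borel_cover_prune[OF assms cover]) (use borel in blast)
next
  fix H :: "(nat \<Rightarrow> 'a) \<Rightarrow> 'b"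
  assume card: "card_le (H ` lim T) L" and fibres: "\<forall>x. borel_lim T {\<nu> \<in> lim T. H \<nu> = x}"
  obtain B where cover: "lim T = (\<Union>i\<in>L. B i)" "\<And>i. i \<in> L \<Longrightarrow> borel_lim T (B i)"
    and same_H: "\<And>i \<nu> \<nu>'. \<nu> \<in> B i \<Longrightarrow> \<nu>' \<in> B i \<Longrightarrow> H \<nu> = H \<nu>'"
    by (rule borel_fibres_cover[OF card fibres[rule_format]]) blast
  obtain i T' where "is_tree T'" "le_star T Ib T'" "lim T' \<subseteq> B i"
    using borel_cover_prune[OF assms cover] by blast
  moreover have "\<exists>c. \<forall>\<nu>\<in>lim T'. H \<nu> = c"
    using \<open>lim T' \<subseteq> B i\<close> same_H by blast
  ultimately show "\<exists>T'. is_tree T' \<and> le_star T Ib T' \<and> (\<exists>c. \<forall>\<nu>\<in>lim T'. H \<nu> = c)"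
    by blast
qed

end
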